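(* Let $\mathfrak{X}$ be a dual polar scheme of diameter $d$ on the vertex set $X$, with base vertex $u_0$, and let $e\ge 0$ be an integer. Let $(Y,w)$ be a positively weighted subset of $X$ which is a relative $2e$-design with respect to $u_0$, i.e. \[ \sum_{i=1}^p\frac{w(Y_{r_i})}{k_{r_i}}\sum_{x\in X_{r_i}}f(x)=\sum_{y\in Y}w(y)f(y)\quad\text{for every } f\in\mathrm{Hom}_0(X)+\mathrm{Hom}_1(X)+\cdots+\mathrm{Hom}_{2e}(X), \] where $\{r_1,\dots,r_p\}=\{r: Y\cap X_r\ne\emptyset\}$. Let $S=X_{r_1}\cup\cdots\cup X_{r_p}$. Then \[ |Y|\ge\dim\big(\mathrm{Hom}_0(S)+\mathrm{Hom}_1(S)+\cdots+\mathrm{Hom}_e(S)\big). \]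
   Context: Dual polar scheme: $V$ is a finite-dimensional vector space over a finite field with a non-degenerate alternating, Hermitian, or quadratic form of Witt index $d$; $X$ is the set of maximal totally isotropic subspaces, with distance $\partial(x,y)=d-\dim(x\cap y)$ (the distance in the dual polar graph), and relations $R_r=\{(x,y):\partial(x,y)=r\}$. Shells $X_r=\{x:\partial(u_0,x)=r\}$, $k_r=|X_r|$. A weighted subset is $Y\subseteq X$ with $w:Y\to\mathbb{R}_{>0}$; $Y_{r}=Y\cap X_r$, $w(Y_r)=\sum_{y\in Y_r}w(y)$. For $z\in X$, $f_z(x)=1$ if $\partial(u_0,z)+\partial(z,x)=\partial(u_0,x)$ and $0$ otherwise; $\mathrm{Hom}_j(X)=\mathrm{span}\{f_z: z\in X_j\}$ (with $\mathrm{Hom}_j(X)=0$ for $j>d$), and $\mathrm{Hom}_j(S)=\{f|_S: f\in\mathrm{Hom}_j(X)\}$. *)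

theory Defs
  imports "HOL-Analysis.Analysis" "HOL-Library.Function_Algebras"
begin

definition bilin_form :: "('k::field^'n \<Rightarrow> 'k^'n \<Rightarrow> 'k) \<Rightarrow> bool" where
  "bilin_form B \<longleftrightarrow>
     (\<forall>x y z. B (x + y) z = B x z + B y z) \<and> (\<forall>x y z. B x (y + z) = B x y + B x z) \<and>
     (\<forall>a x y. B (a *s x) y = a * B x y) \<and> (\<forall>a x y. B x (a *s y) = a * B x y)"

definition alt_form :: "('k::field^'n \<Rightarrow> 'k^'n \<Rightarrow> 'k) \<Rightarrow> bool" where
  "alt_form B \<longleftrightarrow> bilin_form B \<and> (\<forall>x. B x x = 0) \<and> (\<forall>y. (\<forall>x. B x y = 0) \<longrightarrow> y = 0)"

definition field_involution :: "('k::field \<Rightarrow> 'k) \<Rightarrow> bool" where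
  "field_involution \<sigma> \<longleftrightarrow> (\<forall>a b. \<sigma> (a + b) = \<sigma> a + \<sigma> b) \<and> (\<forall>a b. \<sigma> (a * b) = \<sigma> a * \<sigma> b)
     \<and> (\<forall>a. \<sigma> (\<sigma> a) = a) \<and> \<sigma> \<noteq> id"

definition herm_form :: "('k::field \<Rightarrow> 'k) \<Rightarrow> ('k^'n \<Rightarrow> 'k^'n \<Rightarrow> 'k) \<Rightarrow> bool" where
  "herm_form \<sigma> B \<longleftrightarrow> field_involution \<sigma> \<and>
     (\<forall>x y z. B (x + y) z = B x z + B y z) \<and> (\<forall>x y z. B x (y + z) = B x y + B x z) \<and>
     (\<forall>a x y. B (a *s x) y = a * B x y) \<and> (\<forall>a x y. B x (a *s y) = \<sigma> a * B x y) \<and>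
     (\<forall>x y. B y x = \<sigma> (B x y)) \<and> (\<forall>y. (\<forall>x. B x y = 0) \<longrightarrow> y = 0)"

definition quad_form :: "('k::field^'n \<Rightarrow> 'k) \<Rightarrow> bool" where
  "quad_form Q \<longleftrightarrow> (\<forall>a x. Q (a *s x) = a^2 * Q x) \<and>
     bilin_form (\<lambda>x y. Q (x + y) - Q x - Q y) \<and>
     (\<forall>x. Q x = 0 \<and> (\<forall>y. Q (x + y) - Q x - Q y = 0) \<longrightarrow> x = 0)"

text \<open>tiso W: W is totally isotropic (totally singular in the quadratic case) for one of the
  three admissible kinds of forms\<close>
definition polar_iso :: "(('k::field^'n) set \<Rightarrow> bool) \<Rightarrow> bool" where
  "polar_iso tiso \<longleftrightarrow>
     (\<exists>B. alt_form B \<and> tiso = (\<lambda>W. \<forall>x\<in>W. \<forall>y\<in>W. B x y = 0)) \<or>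
     (\<exists>\<sigma> B. herm_form \<sigma> B \<and> tiso = (\<lambda>W. \<forall>x\<in>W. \<forall>y\<in>W. B x y = 0)) \<or>
     (\<exists>Q. quad_form Q \<and> tiso = (\<lambda>W. \<forall>x\<in>W. Q x = 0))"

definition dpX :: "(('k::field^'n::finite) set \<Rightarrow> bool) \<Rightarrow> ('k^'n) set set" where
  "dpX tiso = {W. vec.subspace W \<and> tiso W \<and>
                 (\<forall>W'. vec.subspace W' \<and> tiso W' \<and> W \<subseteq> W' \<longrightarrow> W' = W)}"

definition witt_index :: "(('k::field^'n::finite) set \<Rightarrow> bool) \<Rightarrow> nat" where
  "witt_index tiso = Max {vec.dim W | W. vec.subspace W \<and> tiso W}"

definition dpdist :: "(('k::field^'n::finite) set \<Rightarrow> bool) \<Rightarrow> ('k^'n) set \<Rightarrow> ('k^'n) set \<Rightarrow> nat" where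
  "dpdist tiso x y = witt_index tiso - vec.dim (x \<inter> y)"

definition shell :: "(('k::field^'n::finite) set \<Rightarrow> bool) \<Rightarrow> ('k^'n) set \<Rightarrow> nat \<Rightarrow> ('k^'n) set set" where
  "shell tiso u0 r = {x \<in> dpX tiso. dpdist tiso u0 x = r}"

definition fz :: "(('k::field^'n::finite) set \<Rightarrow> bool) \<Rightarrow> ('k^'n) set \<Rightarrow> ('k^'n) set \<Rightarrow> ('k^'n) set \<Rightarrow> real" where
  "fz tiso u0 z x = (if dpdist tiso u0 z + dpdist tiso z x = dpdist tiso u0 x then 1 else 0)"

text \<open>Hom_0(X) + ... + Hom_j(X): the span of all f_z with z in X_0 \<union> ... \<union> X_j
  (written out as the set of linear combinations of these finitely many functions)\<close>
definition hom_upto :: "(('k::field^'n::finite) set \<Rightarrow> bool) \<Rightarrow> ('k^'n) set \<Rightarrow> nat \<Rightarrow> (('k^'n) set \<Rightarrow> real) set" where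
  "hom_upto tiso u0 j = {g. \<exists>c. g = (\<lambda>x. \<Sum>z\<in>{z \<in> dpX tiso. dpdist tiso u0 z \<le> j}. c z * fz tiso u0 z x)}"

text \<open>restriction of a function to S (represented as the function vanishing outside S)\<close>
definition restr :: "'a set \<Rightarrow> ('a \<Rightarrow> real) \<Rightarrow> 'a \<Rightarrow> real" where
  "restr S f = (\<lambda>x. if x \<in> S then f x else 0)"

definition fscale :: "real \<Rightarrow> ('a \<Rightarrow> real) \<Rightarrow> 'a \<Rightarrow> real" where
  "fscale c f = (\<lambda>x. c * f x)"

interpretation fvs: vector_space "fscale :: real \<Rightarrow> ('a \<Rightarrow> real) \<Rightarrow> 'a \<Rightarrow> real"
  by unfold_locales (auto simp: fscale_def algebra_simps)

end

theory Submission
  imports Defs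
begin

text \<open>
  Order the elements of \<open>X\<close> by \<open>z \<preceq> x\<close> iff \<open>z\<close> lies on a geodesic from \<open>u\<^sub>0\<close> to \<open>x\<close>, so
  that \<open>f\<^sub>z\<close> is the indicator of the up-set of \<open>z\<close>. In a dual polar space two elements
  \<open>z, z' \<preceq> x\<close> have a least upper bound below \<open>x\<close>, namely the element of \<open>X\<close> nearest to \<open>x\<close>
  containing \<open>u\<^sub>0 \<inter> z \<inter> z'\<close>, and its distance from \<open>u\<^sub>0\<close> is at most that of \<open>z\<close> plus that of \<open>z'\<close>.
  Hence \<open>f\<^sub>z f\<^sub>z'\<close> is the sum of \<open>f\<^sub>y\<close> over the minimal upper bounds \<open>y\<close> of \<open>z, z'\<close>, and the
  square of any \<open>g \<in> Hom\<^sub>0 + \<dots> + Hom\<^sub>e\<close> lies in \<open>Hom\<^sub>0 + \<dots> + Hom\<^sub>2\<^sub>e\<close>. If \<open>g\<close> vanishes on \<open>Y\<close>,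
  the design identity for \<open>g\<^sup>2 \<ge> 0\<close> with positive weights forces \<open>g\<^sup>2\<close> to vanish on \<open>S\<close>.
  So restriction to \<open>Y\<close> is injective on \<open>Hom\<^sub>0(S) + \<dots> + Hom\<^sub>e(S)\<close>, whose dimension is therefore
  at most \<open>|Y|\<close>.
\<close>

definition sumset :: "'a::ab_group_add set \<Rightarrow> 'a set \<Rightarrow> 'a set" where
  "sumset U W = {u + w |u w. u \<in> U \<and> w \<in> W}"

lemma finite_vec_sets: "finite (A :: ('k::finite^'n::finite) set set)"
  by (rule finite_subset[of _ UNIV]) auto

lemma subspace_sumset: "vec.subspace U \<Longrightarrow> vec.subspace W \<Longrightarrow> vec.subspace (sumset U W)"
  unfolding sumset_def by (rule vec.subspace_sums)

lemma sumset_subset: "vec.subspace A \<Longrightarrow> U \<subseteq> A \<Longrightarrow> W \<subseteq> A \<Longrightarrow> sumset U W \<subseteq> A"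
  unfolding sumset_def using vec.subspace_add by blast

lemma sumset_mono: "U \<subseteq> U' \<Longrightarrow> W \<subseteq> W' \<Longrightarrow> sumset U W \<subseteq> sumset U' W'"
  unfolding sumset_def by blast

lemma subset_sumset_left: "vec.subspace W \<Longrightarrow> U \<subseteq> sumset U W"
  unfolding sumset_def using vec.subspace_0 by force

lemma subset_sumset_right: "vec.subspace U \<Longrightarrow> W \<subseteq> sumset U W"
  unfolding sumset_def using vec.subspace_0 by force

section \<open>Polar spaces\<close>

locale polar_space =
  fixes tiso :: "('k::{finite,field}^'n::finite) set \<Rightarrow> bool" and \<beta> :: "'k^'n \<Rightarrow> 'k^'n \<Rightarrow> 'k"
  assumes form_add_left: "\<beta> (x + y) z = \<beta> x z + \<beta> y z"
    and form_scale_left: "\<beta> (a *s x) y = a * \<beta> x y"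
    and orth_sym: "\<beta> x y = 0 \<longleftrightarrow> \<beta> y x = 0"
    and iso_orth: "vec.subspace W \<Longrightarrow> tiso W \<Longrightarrow> x \<in> W \<Longrightarrow> y \<in> W \<Longrightarrow> \<beta> x y = 0"
    and iso_sumset: "vec.subspace U \<Longrightarrow> vec.subspace W \<Longrightarrow> tiso U \<Longrightarrow> tiso W \<Longrightarrow>
        (\<And>u w. u \<in> U \<Longrightarrow> w \<in> W \<Longrightarrow> \<beta> u w = 0) \<Longrightarrow> tiso (sumset U W)"
    and iso_subset: "tiso W \<Longrightarrow> U \<subseteq> W \<Longrightarrow> tiso U"
    and iso_zero: "tiso {0}"

lemma reflexive_form_polar_space:
  fixes B :: "'k::{finite,field}^'n::finite \<Rightarrow> 'k^'n \<Rightarrow> 'k"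
  assumes add_left: "\<And>x y z. B (x + y) z = B x z + B y z"
    and add_right: "\<And>x y z. B x (y + z) = B x y + B x z"
    and scale_left: "\<And>a x y. B (a *s x) y = a * B x y"
    and refl: "\<And>x y. B x y = 0 \<longleftrightarrow> B y x = 0"
  shows "polar_space (\<lambda>W. \<forall>x\<in>W. \<forall>y\<in>W. B x y = 0) B"
proof
  fix U W :: "('k^'n) set"
  assume U: "\<forall>x\<in>U. \<forall>y\<in>U. B x y = 0" and W: "\<forall>x\<in>W. \<forall>y\<in>W. B x y = 0"
    and UW: "\<And>u w. u \<in> U \<Longrightarrow> w \<in> W \<Longrightarrow> B u w = 0"
  show "\<forall>x\<in>sumset U W. \<forall>y\<in>sumset U W. B x y = 0"
  proof (intro ballI)
    fix x y assume "x \<in> sumset U W" "y \<in> sumset U W"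
    then obtain u w u' w' where "x = u + w" "y = u' + w'" "u \<in> U" "w \<in> W" "u' \<in> U" "w' \<in> W"
      unfolding sumset_def by blast
    moreover have "B (u + w) (u' + w') = B u u' + B u w' + (B w u' + B w w')"
      by (simp add: add_left add_right)
    moreover have "B w u' = 0" if "w \<in> W" "u' \<in> U" using UW[OF that(2,1)] refl by blast
    ultimately show "B x y = 0" using U W UW by simp
  qed
next
  show "\<forall>x\<in>{0}. \<forall>y\<in>{0}. B x y = 0" using scale_left[of 0 0 0] by simp
qed (rule add_left scale_left refl | blast)+

lemma alt_form_polar_space:
  fixes B :: "'k::{finite,field}^'n::finite \<Rightarrow> 'k^'n \<Rightarrow> 'k"
  assumes "alt_form B"
  shows "polar_space (\<lambda>W. \<forall>x\<in>W. \<forall>y\<in>W. B x y = 0) B"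
proof -
  have alt: "\<And>x. B x x = 0" using assms by (auto simp: alt_form_def)
  have add_left: "\<And>x y z. B (x + y) z = B x z + B y z"
    and add_right: "\<And>x y z. B x (y + z) = B x y + B x z"
    and scale_left: "\<And>a x y. B (a *s x) y = a * B x y"
    using assms by (auto simp: alt_form_def bilin_form_def)
  have skew: "B x y = - B y x" for x y
  proof -
    have "0 = B (x + y) (x + y)" using alt by simp
    also have "\<dots> = B x x + B x y + (B y x + B y y)" by (simp add: add_left add_right)
    also have "\<dots> = B x y + B y x" using alt by simp
    finally show ?thesis by (simp add: eq_neg_iff_add_eq_0)
  qed
  show ?thesis
    by (rule reflexive_form_polar_space[OF add_left add_right scale_left]) (subst skew, simp)
qed

lemma herm_form_polar_space:
  fixes B :: "'k::{finite,field}^'n::finite \<Rightarrow> 'k^'n \<Rightarrow> 'k"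
  assumes "herm_form \<sigma> B"
  shows "polar_space (\<lambda>W. \<forall>x\<in>W. \<forall>y\<in>W. B x y = 0) B"
proof -
  note herm_form = assms[unfolded herm_form_def]
  have \<sigma>_add: "\<forall>a b. \<sigma> (a + b) = \<sigma> a + \<sigma> b"
    using herm_form unfolding field_involution_def by (elim conjE)
  have add_left: "\<forall>x y z. B (x + y) z = B x z + B y z" using herm_form by (elim conjE)
  have add_right: "\<forall>x y z. B x (y + z) = B x y + B x z" using herm_form by (elim conjE)
  have scale_left: "\<forall>a x y. B (a *s x) y = a * B x y" using herm_form by (elim conjE)
  have herm: "\<forall>x y. B y x = \<sigma> (B x y)" using herm_form by (elim conjE)
  have "\<sigma> 0 = 0"
    using \<sigma>_add[rule_format, of 0 0] by (metis add.right_neutral add_left_cancel)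
  then have refl: "B x y = 0 \<longleftrightarrow> B y x = 0" for x y
    using herm by metis
  show ?thesis
    by (rule reflexive_form_polar_space[OF add_left[rule_format] add_right[rule_format]
          scale_left[rule_format] refl])
qed

lemma quad_form_polar_space:
  fixes Q :: "'k::{finite,field}^'n::finite \<Rightarrow> 'k"
  assumes "quad_form Q"
  shows "polar_space (\<lambda>W. \<forall>x\<in>W. Q x = 0) (\<lambda>x y. Q (x + y) - Q x - Q y)"
proof -
  have scale: "\<And>a x. Q (a *s x) = a^2 * Q x" and polar: "bilin_form (\<lambda>x y. Q (x + y) - Q x - Q y)"
    using assms by (auto simp: quad_form_def)
  have add_left: "\<And>x y z. Q (x + y + z) - Q (x + y) - Q z = (Q (x + z) - Q x - Q z) + (Q (y + z) - Q y - Q z)"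
    and scale_left: "\<And>a x y. Q (a *s x + y) - Q (a *s x) - Q y = a * (Q (x + y) - Q x - Q y)"
    using polar unfolding bilin_form_def by blast+
  show ?thesis
  proof
    fix W :: "('k^'n) set" and x y assume "vec.subspace W" "\<forall>x\<in>W. Q x = 0" "x \<in> W" "y \<in> W"
    then show "Q (x + y) - Q x - Q y = 0" by (simp add: vec.subspace_add)
  next
    fix U W :: "('k^'n) set"
    assume "\<forall>x\<in>U. Q x = 0" "\<forall>x\<in>W. Q x = 0" "\<And>u w. u \<in> U \<Longrightarrow> w \<in> W \<Longrightarrow> Q (u + w) - Q u - Q w = 0"
    then show "\<forall>x\<in>sumset U W. Q x = 0" unfolding sumset_def by fastforce
  next
    show "\<forall>x\<in>{0}. Q x = 0" using scale[of 0 0] by simp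
  next
    show "Q (x + y + z) - Q (x + y) - Q z = (Q (x + z) - Q x - Q z) + (Q (y + z) - Q y - Q z)"
      for x y z by (rule add_left)
    show "Q (a *s x + y) - Q (a *s x) - Q y = a * (Q (x + y) - Q x - Q y)" for a x y
      by (rule scale_left)
    show "(Q (x + y) - Q x - Q y = 0) = (Q (y + x) - Q y - Q x = 0)" for x y
      by (simp add: algebra_simps)
  qed blast
qed

lemma polar_iso_polar_space:
  fixes tiso :: "('k::{finite,field}^'n::finite) set \<Rightarrow> bool"
  assumes "polar_iso tiso"
  obtains \<beta> where "polar_space tiso \<beta>"
  using assms unfolding polar_iso_def
proof (elim disjE exE conjE)
  fix B assume "alt_form B" "tiso = (\<lambda>W. \<forall>x\<in>W. \<forall>y\<in>W. B x y = 0)"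
  then show ?thesis using alt_form_polar_space[of B] that by simp
next
  fix \<sigma> B assume "herm_form \<sigma> B" "tiso = (\<lambda>W. \<forall>x\<in>W. \<forall>y\<in>W. B x y = 0)"
  then show ?thesis using herm_form_polar_space[of \<sigma> B] that by simp
next
  fix Q assume "quad_form Q" "tiso = (\<lambda>W. \<forall>x\<in>W. Q x = 0)"
  then show ?thesis using quad_form_polar_space[of Q] that by simp
qed

context polar_space
begin

definition perp :: "('k^'n) set \<Rightarrow> ('k^'n) set" where
  "perp U = {v. \<forall>u\<in>U. \<beta> v u = 0}"

lemma form_zero_left: "\<beta> 0 y = 0"
  using form_scale_left[of 0 0 y] by simp

lemma form_diff_left: "\<beta> (x - y) z = \<beta> x z - \<beta> y z"
  using form_add_left[of "x - y" y z] by simp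

lemma subspace_perp: "vec.subspace (perp U)"
  unfolding vec.subspace_def perp_def by (auto simp: form_zero_left form_add_left form_scale_left)

lemma perp_insert: "perp (insert c C) = perp C \<inter> perp {c}"
  by (auto simp: perp_def)

lemma perp_antimono: "U \<subseteq> V \<Longrightarrow> perp V \<subseteq> perp U"
  by (auto simp: perp_def)

lemma mem_perp_iff_subset_perp: "v \<in> perp U \<longleftrightarrow> U \<subseteq> perp {v}"
  by (auto simp: perp_def orth_sym[of v])

lemma perp_span: "perp (vec.span C) = perp C"
proof
  show "perp (vec.span C) \<subseteq> perp C" using vec.span_superset[of C] unfolding perp_def by blast
  show "perp C \<subseteq> perp (vec.span C)"
  proof
    fix v assume "v \<in> perp C"
    then have "vec.span C \<subseteq> perp {v}"
      by (intro vec.span_minimal subspace_perp) (simp only: mem_perp_iff_subset_perp)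
    then show "v \<in> perp (vec.span C)" by (simp only: mem_perp_iff_subset_perp)
  qed
qed

lemma dim_le_dim_inter_perp_singleton:
  assumes V: "vec.subspace V"
  shows "vec.dim V \<le> vec.dim (V \<inter> perp {c}) + 1"
proof (cases "V \<subseteq> perp {c}")
  case True then show ?thesis by (simp add: Int_absorb2)
next
  case False
  then obtain v0 where v0: "v0 \<in> V" "\<beta> v0 c \<noteq> 0" by (auto simp: perp_def)
  let ?K = "V \<inter> perp {c}"
  have "V \<subseteq> vec.span (insert v0 ?K)"
  proof
    fix v assume v: "v \<in> V"
    define t where "t = \<beta> v c / \<beta> v0 c"
    have "\<beta> (v - t *s v0) c = 0" using v0 by (simp add: form_diff_left form_scale_left t_def)
    moreover have "v - t *s v0 \<in> V" using V v v0 vec.subspace_diff vec.subspace_scale by blast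
    ultimately have "v - t *s v0 \<in> vec.span (insert v0 ?K)" by (simp add: perp_def vec.span_base)
    moreover have "t *s v0 \<in> vec.span (insert v0 ?K)" by (simp add: vec.span_base vec.span_scale)
    ultimately have "(v - t *s v0) + t *s v0 \<in> vec.span (insert v0 ?K)" by (rule vec.span_add)
    then show "v \<in> vec.span (insert v0 ?K)" by simp
  qed
  then have "vec.dim V \<le> vec.dim (insert v0 ?K)" by (rule vec.dim_mono)
  also have "\<dots> \<le> vec.dim ?K + 1" by (simp add: vec.dim_insert)
  finally show ?thesis .
qed

lemma dim_le_dim_inter_perp:
  assumes "finite C" "vec.subspace x"
  shows "vec.dim x \<le> vec.dim (x \<inter> perp C) + card C"
  using assms(1)
proof (induction C rule: finite_induct)
  case empty then show ?case by (simp add: perp_def)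
next
  case (insert c C)
  have "vec.subspace (x \<inter> perp C)" using assms(2) subspace_perp vec.subspace_inter by blast
  from dim_le_dim_inter_perp_singleton[OF this, of c]
  have "vec.dim (x \<inter> perp C) \<le> vec.dim (x \<inter> perp (insert c C)) + 1"
    by (simp only: perp_insert[of c C] Int_assoc)
  moreover have "card (insert c C) = card C + 1" using insert.hyps by simp
  ultimately show ?case using insert.IH by linarith
qed

text \<open>Extend a basis of \<open>W \<inter> x\<close> to one of \<open>W\<close>; only the new basis vectors cut down \<open>x\<close>.\<close>
lemma dim_inter_perp_lower_bound:
  assumes W: "vec.subspace W" and x: "vec.subspace x" and orth: "x \<subseteq> perp (W \<inter> x)"
  shows "vec.dim x + vec.dim (W \<inter> x) \<le> vec.dim (x \<inter> perp W) + vec.dim W"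
proof -
  obtain B0 where B0: "B0 \<subseteq> W \<inter> x" "vec.independent B0" "W \<inter> x \<subseteq> vec.span B0"
      "card B0 = vec.dim (W \<inter> x)"
    using vec.basis_exists by blast
  obtain B where B: "B0 \<subseteq> B" "B \<subseteq> W" "vec.independent B" "W \<subseteq> vec.span B"
    using vec.maximal_independent_subset_extend[of B0 W] B0 by blast
  have "card (B - B0) = vec.dim W - vec.dim (W \<inter> x)"
    using card_Diff_subset[OF finite_subset[OF B(1)] B(1)] vec.basis_card_eq_dim[OF B(2,4,3)] B0(4)
    by simp
  moreover have "vec.dim x \<le> vec.dim (x \<inter> perp (B - B0)) + card (B - B0)"
    by (rule dim_le_dim_inter_perp) (simp_all add: x)
  moreover have "x \<inter> perp (B - B0) \<subseteq> x \<inter> perp W"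
  proof -
    have "x \<inter> perp (B - B0) \<subseteq> perp B" using B0(1) orth unfolding perp_def by blast
    then have "x \<inter> perp (B - B0) \<subseteq> perp (vec.span B)" by (simp add: perp_span)
    then show ?thesis using B(4) by (auto simp: perp_def)
  qed
  then have "vec.dim (x \<inter> perp (B - B0)) \<le> vec.dim (x \<inter> perp W)" by (rule vec.dim_subset)
  moreover have "vec.dim (W \<inter> x) \<le> vec.dim W" by (rule vec.dim_subset) blast
  ultimately show ?thesis by linarith
qed

abbreviation iso_subspace :: "('k^'n) set \<Rightarrow> bool" where
  "iso_subspace W \<equiv> vec.subspace W \<and> tiso W"

lemma iso_subspace_subset_perp: "iso_subspace W \<Longrightarrow> W \<subseteq> perp W"
  using iso_orth unfolding perp_def by blast

lemma dpX_iso_subspace: "x \<in> dpX tiso \<Longrightarrow> iso_subspace x"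
  by (simp add: dpX_def)

lemma dpX_maximal: "x \<in> dpX tiso \<Longrightarrow> iso_subspace V \<Longrightarrow> x \<subseteq> V \<Longrightarrow> V = x"
  by (simp add: dpX_def)

lemma iso_subspace_inter: "iso_subspace x \<Longrightarrow> vec.subspace U \<Longrightarrow> iso_subspace (x \<inter> U)"
  using iso_subset vec.subspace_inter by blast

lemma dim_le_witt_index: "iso_subspace W \<Longrightarrow> vec.dim W \<le> witt_index tiso"
  unfolding witt_index_def setcompr_eq_image by (rule Max_ge) (auto intro: finite_vec_sets)

lemma witt_index_attained: "\<exists>W. iso_subspace W \<and> vec.dim W = witt_index tiso"
proof -
  have "witt_index tiso \<in> vec.dim ` {W. iso_subspace W}"
    unfolding witt_index_def setcompr_eq_image
    using iso_zero by (intro Max_in) (auto intro!: finite_vec_sets exI[of _ "{0}"])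
  then show ?thesis by auto
qed

lemma iso_subspace_dim_witt_index_dpX:
  assumes "iso_subspace M" "vec.dim M = witt_index tiso"
  shows "M \<in> dpX tiso"
  unfolding dpX_def
proof (intro CollectI conjI allI impI)
  fix W' assume "vec.subspace W' \<and> tiso W' \<and> M \<subseteq> W'"
  then show "W' = M" using vec.subspace_dim_equal[of M W'] dim_le_witt_index[of W'] assms by auto
qed (use assms in auto)

lemma iso_subspace_in_dpX:
  assumes "iso_subspace W" shows "\<exists>M \<in> dpX tiso. W \<subseteq> M"
proof -
  let ?S = "{V. iso_subspace V \<and> W \<subseteq> V}"
  have "Max (vec.dim ` ?S) \<in> vec.dim ` ?S" by (rule Max_in) (use assms finite_vec_sets in auto)
  then obtain M where M: "M \<in> ?S" "vec.dim M = Max (vec.dim ` ?S)" by auto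
  have "M \<in> dpX tiso"
    unfolding dpX_def
  proof (intro CollectI conjI allI impI)
    fix W' assume W': "vec.subspace W' \<and> tiso W' \<and> M \<subseteq> W'"
    then have "vec.dim W' \<le> Max (vec.dim ` ?S)" by (intro Max_ge) (use M finite_vec_sets in auto)
    then have "vec.dim W' \<le> vec.dim M" using M by simp
    then show "W' = M" using vec.subspace_dim_equal[of M W'] W' M by auto
  qed (use M in auto)
  then show ?thesis using M by blast
qed

lemma subset_perp_dpX_subset:
  assumes M: "M \<in> dpX tiso" and V: "iso_subspace V" and VM: "V \<subseteq> perp M"
  shows "V \<subseteq> M"
proof -
  have iM: "iso_subspace M" using M by (rule dpX_iso_subspace)
  have "\<beta> u w = 0" if "u \<in> M" "w \<in> V" for u w
    using VM that orth_sym unfolding perp_def by blast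
  then have "iso_subspace (sumset M V)"
    using iso_sumset iM V subspace_sumset by blast
  then have "sumset M V = M" using dpX_maximal[OF M] subset_sumset_left V by blast
  then show ?thesis using subset_sumset_right iM by blast
qed

lemma dim_dpX_le:
  assumes U: "U \<in> dpX tiso" and W: "W \<in> dpX tiso"
  shows "vec.dim W \<le> vec.dim U"
proof -
  have iU: "iso_subspace U" and iW: "iso_subspace W" using U W by (auto dest: dpX_iso_subspace)
  have "vec.dim W + vec.dim (U \<inter> W) \<le> vec.dim (W \<inter> perp U) + vec.dim U"
    using iso_subspace_subset_perp[OF iW] perp_antimono[of "U \<inter> W" W] iU iW
    by (intro dim_inter_perp_lower_bound) auto
  moreover have "W \<inter> perp U \<subseteq> U \<inter> W"
    using subset_perp_dpX_subset[OF U iso_subspace_inter[OF iW subspace_perp]] by blast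
  then have "vec.dim (W \<inter> perp U) \<le> vec.dim (U \<inter> W)" by (rule vec.dim_subset)
  ultimately show ?thesis by linarith
qed

lemma dim_dpX: assumes "x \<in> dpX tiso" shows "vec.dim x = witt_index tiso"
proof -
  obtain W where W: "iso_subspace W" "vec.dim W = witt_index tiso"
    using witt_index_attained by blast
  obtain M where M: "M \<in> dpX tiso" "W \<subseteq> M" using iso_subspace_in_dpX[OF W(1)] by blast
  have "vec.dim M = witt_index tiso"
    using vec.dim_subset[OF M(2)] dim_le_witt_index[OF dpX_iso_subspace[OF M(1)]] W by simp
  then show ?thesis using dim_dpX_le[OF M(1) assms] dim_dpX_le[OF assms M(1)] by simp
qed

definition proj :: "('k^'n) set \<Rightarrow> ('k^'n) set \<Rightarrow> ('k^'n) set" where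
  "proj W x = sumset W (x \<inter> perp W)"

lemma subset_proj: "vec.subspace W \<Longrightarrow> vec.subspace x \<Longrightarrow> W \<subseteq> proj W x"
  unfolding proj_def by (intro subset_sumset_left vec.subspace_inter subspace_perp)

lemma inter_perp_subset_proj: "vec.subspace W \<Longrightarrow> x \<inter> perp W \<subseteq> proj W x"
  unfolding proj_def by (rule subset_sumset_right)

lemma proj_subset_sumset: "x \<inter> perp W \<subseteq> B \<Longrightarrow> proj W x \<subseteq> sumset W B"
  unfolding proj_def by (rule sumset_mono) auto

text \<open>\<open>proj W x\<close> is the element of \<open>X\<close> containing \<open>W\<close> nearest to \<open>x\<close>.\<close>
lemma proj_in_dpX:
  assumes W: "iso_subspace W" and x: "x \<in> dpX tiso"
  shows "proj W x \<in> dpX tiso"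
proof -
  let ?V = "x \<inter> perp W"
  have ix: "iso_subspace x" using x by (rule dpX_iso_subspace)
  have iV: "iso_subspace ?V" using ix subspace_perp by (rule iso_subspace_inter)
  have "\<beta> u v = 0" if "u \<in> W" "v \<in> ?V" for u v
    using that orth_sym unfolding perp_def by blast
  then have iP: "iso_subspace (proj W x)"
    unfolding proj_def using iso_sumset W iV subspace_sumset by blast
  have "W \<inter> ?V = W \<inter> x" using iso_subspace_subset_perp[OF W] by blast
  then have "vec.dim (proj W x) + vec.dim (W \<inter> x) = vec.dim W + vec.dim ?V"
    using vec.dim_sums_Int[of W ?V] W iV unfolding proj_def sumset_def by simp
  moreover have "vec.dim x + vec.dim (W \<inter> x) \<le> vec.dim ?V + vec.dim W"
    using iso_subspace_subset_perp[OF ix] perp_antimono[of "W \<inter> x" x] W ix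
    by (intro dim_inter_perp_lower_bound) auto
  ultimately have "witt_index tiso \<le> vec.dim (proj W x)" using dim_dpX[OF x] by linarith
  then show ?thesis
    using iP dim_le_witt_index[OF iP] by (intro iso_subspace_dim_witt_index_dpX) auto
qed

end

section \<open>The geodesic order\<close>

locale based_polar_space = polar_space tiso \<beta>
  for tiso :: "('k::{finite,field}^'n::finite) set \<Rightarrow> bool" and \<beta> +
  fixes u0 :: "('k^'n) set"
  assumes u0_in_dpX: "u0 \<in> dpX tiso"
begin

definition geod_le :: "('k^'n) set \<Rightarrow> ('k^'n) set \<Rightarrow> bool" where
  "geod_le a b \<longleftrightarrow> dpdist tiso u0 a + dpdist tiso a b = dpdist tiso u0 b"

lemma fz_geod_le: "fz tiso u0 z x = (if geod_le z x then 1 else 0)"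
  by (simp add: fz_def geod_le_def)

lemma subspace_u0: "vec.subspace u0"
  using dpX_iso_subspace[OF u0_in_dpX] by simp

lemma geod_le_iff:
  assumes a: "a \<in> dpX tiso" and b: "b \<in> dpX tiso"
  shows "geod_le a b \<longleftrightarrow> sumset (u0 \<inter> a) (a \<inter> b) = a \<and> u0 \<inter> b \<subseteq> a"
proof -
  have sa: "vec.subspace a" and sb: "vec.subspace b"
    using a b by (auto dest: dpX_iso_subspace)
  have sP: "vec.subspace (u0 \<inter> a)" and sQ: "vec.subspace (a \<inter> b)" and sB: "vec.subspace (u0 \<inter> b)"
    using sa sb subspace_u0 vec.subspace_inter by blast+
  let ?S = "sumset (u0 \<inter> a) (a \<inter> b)"
  have grassmann: "vec.dim ?S + vec.dim ((u0 \<inter> a) \<inter> (a \<inter> b)) = vec.dim (u0 \<inter> a) + vec.dim (a \<inter> b)"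
    unfolding sumset_def by (rule vec.dim_sums_Int[OF sP sQ])
  have Sa: "?S \<subseteq> a" by (rule sumset_subset[OF sa]) auto
  have da: "vec.dim a = witt_index tiso" and db: "vec.dim b = witt_index tiso"
    and du: "vec.dim u0 = witt_index tiso"
    using a b u0_in_dpX by (auto intro: dim_dpX)
  have IB: "(u0 \<inter> a) \<inter> (a \<inter> b) \<subseteq> u0 \<inter> b" by blast
  have d1: "vec.dim ?S \<le> witt_index tiso" using vec.dim_subset[OF Sa] da by simp
  have d2: "vec.dim ((u0 \<inter> a) \<inter> (a \<inter> b)) \<le> vec.dim (u0 \<inter> b)" using vec.dim_subset[OF IB] .
  have "vec.dim (u0 \<inter> b) \<le> witt_index tiso" "vec.dim (u0 \<inter> a) \<le> witt_index tiso"
    "vec.dim (a \<inter> b) \<le> witt_index tiso"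
    using vec.dim_subset[of "u0 \<inter> b" b] vec.dim_subset[of "u0 \<inter> a" a]
      vec.dim_subset[of "a \<inter> b" a] da db by auto
  then have L: "geod_le a b \<longleftrightarrow>
      vec.dim (u0 \<inter> a) + vec.dim (a \<inter> b) = witt_index tiso + vec.dim (u0 \<inter> b)"
    unfolding geod_le_def dpdist_def by (simp add: Int_commute) linarith
  show ?thesis
  proof
    assume "geod_le a b"
    with L grassmann d1 d2 have e1: "vec.dim ?S = witt_index tiso"
      and e2: "vec.dim ((u0 \<inter> a) \<inter> (a \<inter> b)) = vec.dim (u0 \<inter> b)" by linarith+
    have "?S = a" using vec.subspace_dim_equal[OF subspace_sumset[OF sP sQ] sa Sa] e1 da by simp
    moreover have "(u0 \<inter> a) \<inter> (a \<inter> b) = u0 \<inter> b"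
      using vec.subspace_dim_equal[OF vec.subspace_inter[OF sP sQ] sB IB] e2 by simp
    ultimately show "?S = a \<and> u0 \<inter> b \<subseteq> a" by blast
  next
    assume H: "?S = a \<and> u0 \<inter> b \<subseteq> a"
    then have "(u0 \<inter> a) \<inter> (a \<inter> b) = u0 \<inter> b" by blast
    with H grassmann da L show "geod_le a b" by simp
  qed
qed

lemma geod_le_trans:
  assumes a: "a \<in> dpX tiso" and b: "b \<in> dpX tiso" and c: "c \<in> dpX tiso"
    and ab: "geod_le a b" and bc: "geod_le b c"
  shows "geod_le a c"
proof -
  have A: "sumset (u0 \<inter> a) (a \<inter> b) = a" "u0 \<inter> b \<subseteq> a" using ab geod_le_iff[OF a b] by auto
  have B: "sumset (u0 \<inter> b) (b \<inter> c) = b" "u0 \<inter> c \<subseteq> b" using bc geod_le_iff[OF b c] by auto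
  have sa: "vec.subspace a" using a by (auto dest: dpX_iso_subspace)
  have "a \<subseteq> sumset (u0 \<inter> a) (a \<inter> c)"
  proof
    fix v assume "v \<in> a"
    then obtain p q where pq: "v = p + q" "p \<in> u0 \<inter> a" "q \<in> a \<inter> b"
      using A(1) unfolding sumset_def by blast
    then obtain p' q' where pq': "q = p' + q'" "p' \<in> u0 \<inter> b" "q' \<in> b \<inter> c"
      using B(1) unfolding sumset_def by blast
    have p'a: "p' \<in> a" using pq'(2) A(2) by blast
    have "q' = q - p'" using pq'(1) by simp
    then have q'a: "q' \<in> a" using vec.subspace_diff[OF sa _ p'a] pq(3) by simp
    have "p + p' \<in> u0 \<inter> a" using pq(2) p'a pq'(2) vec.subspace_add sa subspace_u0 by blast
    moreover have "v = (p + p') + q'" using pq pq' by (simp add: add.assoc)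
    ultimately show "v \<in> sumset (u0 \<inter> a) (a \<inter> c)" unfolding sumset_def using q'a pq'(3) by blast
  qed
  moreover have "sumset (u0 \<inter> a) (a \<inter> c) \<subseteq> a" by (rule sumset_subset[OF sa]) auto
  moreover have "u0 \<inter> c \<subseteq> a" using A(2) B(2) by blast
  ultimately show ?thesis using geod_le_iff[OF a c] by blast
qed

lemma geod_le_antisym:
  assumes a: "a \<in> dpX tiso" and b: "b \<in> dpX tiso" and ab: "geod_le a b" and ba: "geod_le b a"
  shows "a = b"
proof -
  have A: "sumset (u0 \<inter> a) (a \<inter> b) = a" using ab geod_le_iff[OF a b] by auto
  have B: "u0 \<inter> a \<subseteq> b" using ba geod_le_iff[OF b a] by auto
  have "a \<subseteq> b"
    using sumset_subset[of b "u0 \<inter> a" "a \<inter> b"] A B b by (auto dest: dpX_iso_subspace)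
  then show ?thesis using dpX_maximal[OF a] dpX_iso_subspace[OF b] by blast
qed

lemma dpdist_le_add_of_meet:
  assumes z: "z \<in> dpX tiso" and z': "z' \<in> dpX tiso" and m: "u0 \<inter> m = u0 \<inter> z \<inter> z'"
  shows "dpdist tiso u0 m \<le> dpdist tiso u0 z + dpdist tiso u0 z'"
proof -
  have sP: "vec.subspace (u0 \<inter> z)" and sP': "vec.subspace (u0 \<inter> z')"
    using z z' subspace_u0 vec.subspace_inter by (blast dest: dpX_iso_subspace)+
  have grassmann: "vec.dim (sumset (u0 \<inter> z) (u0 \<inter> z')) + vec.dim (u0 \<inter> m)
      = vec.dim (u0 \<inter> z) + vec.dim (u0 \<inter> z')"
    using vec.dim_sums_Int[OF sP sP'] m unfolding sumset_def by (simp add: Int_ac)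
  have du: "vec.dim u0 = witt_index tiso" using u0_in_dpX by (rule dim_dpX)
  have "sumset (u0 \<inter> z) (u0 \<inter> z') \<subseteq> u0" by (rule sumset_subset[OF subspace_u0]) auto
  then have "vec.dim (sumset (u0 \<inter> z) (u0 \<inter> z')) \<le> witt_index tiso"
    using vec.dim_subset du by metis
  moreover have "vec.dim (u0 \<inter> z) \<le> witt_index tiso" "vec.dim (u0 \<inter> z') \<le> witt_index tiso"
    using vec.dim_subset[of "u0 \<inter> z" u0] vec.dim_subset[of "u0 \<inter> z'" u0] du by auto
  ultimately show ?thesis using grassmann unfolding dpdist_def by simp
qed

section \<open>Joins in the geodesic order\<close>

context
  fixes W x :: "('k^'n) set"
  assumes W: "vec.subspace W" "W \<subseteq> u0" and x: "x \<in> dpX tiso" and u0x: "u0 \<inter> x \<subseteq> W"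
begin

lemma proj_in_dpX_of_meet: "proj W x \<in> dpX tiso"
  using W x iso_subset dpX_iso_subspace[OF u0_in_dpX] by (intro proj_in_dpX) auto

lemma u0_inter_proj: "u0 \<inter> proj W x = W"
proof
  show "W \<subseteq> u0 \<inter> proj W x" using W subset_proj x by (auto dest: dpX_iso_subspace)
  show "u0 \<inter> proj W x \<subseteq> W"
  proof
    fix v assume v: "v \<in> u0 \<inter> proj W x"
    then obtain w y where wy: "v = w + y" "w \<in> W" "y \<in> x \<inter> perp W"
      unfolding proj_def sumset_def by blast
    have "y = v - w" using wy by simp
    then have "y \<in> u0" using vec.subspace_diff[OF subspace_u0] v wy(2) W by auto
    then have "y \<in> W" using wy(3) u0x by blast
    then show "v \<in> W" using wy vec.subspace_add[OF W(1)] by simp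
  qed
qed

lemma proj_geod_le: "geod_le (proj W x) x"
  unfolding geod_le_iff[OF proj_in_dpX_of_meet x] u0_inter_proj
proof
  have "proj W x \<subseteq> sumset W (proj W x \<inter> x)"
    using inter_perp_subset_proj[OF W(1)] by (intro proj_subset_sumset) auto
  moreover have "sumset W (proj W x \<inter> x) \<subseteq> proj W x"
    using proj_in_dpX_of_meet subset_proj[OF W(1)] x
    by (intro sumset_subset) (auto dest: dpX_iso_subspace)
  ultimately show "sumset W (proj W x \<inter> x) = proj W x" by blast
  show "u0 \<inter> x \<subseteq> proj W x" using u0x subset_proj[OF W(1)] x by (auto dest: dpX_iso_subspace)
qed

lemma geod_le_proj:
  assumes t: "t \<in> dpX tiso" "geod_le t x" "W \<subseteq> t"
  shows "geod_le t (proj W x)"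
  unfolding geod_le_iff[OF t(1) proj_in_dpX_of_meet] u0_inter_proj
proof
  have T: "sumset (u0 \<inter> t) (t \<inter> x) = t" using t geod_le_iff[OF t(1) x] by auto
  have it: "iso_subspace t" using t(1) by (rule dpX_iso_subspace)
  have "t \<inter> x \<subseteq> proj W x"
    using iso_subspace_subset_perp[OF it] perp_antimono[OF t(3)] inter_perp_subset_proj[OF W(1)]
    by blast
  then have "t \<subseteq> sumset (u0 \<inter> t) (t \<inter> proj W x)"
    using T unfolding sumset_def by blast
  moreover have "sumset (u0 \<inter> t) (t \<inter> proj W x) \<subseteq> t" using it by (intro sumset_subset) auto
  ultimately show "sumset (u0 \<inter> t) (t \<inter> proj W x) = t" by blast
qed (use t in simp)

lemma proj_geod_le_least:
  assumes y: "y \<in> dpX tiso" "u0 \<inter> y \<subseteq> W" "geod_le y x"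
  shows "geod_le (proj W x) y"
  unfolding geod_le_iff[OF proj_in_dpX_of_meet y(1)] u0_inter_proj
proof
  have Y: "sumset (u0 \<inter> y) (y \<inter> x) = y" using y geod_le_iff[OF y(1) x] by auto
  have ix: "iso_subspace x" using x by (rule dpX_iso_subspace)
  have "x \<inter> perp W \<subseteq> y"
  proof
    fix v assume v: "v \<in> x \<inter> perp W"
    have "v \<in> perp (u0 \<inter> y)" using v perp_antimono[OF y(2)] by blast
    moreover have "v \<in> perp (y \<inter> x)"
      using v iso_subspace_subset_perp[OF ix] perp_antimono[of "y \<inter> x" x] by blast
    ultimately have "u0 \<inter> y \<subseteq> perp {v}" "y \<inter> x \<subseteq> perp {v}"
      by (simp_all only: mem_perp_iff_subset_perp)
    then have "y \<subseteq> perp {v}" using Y sumset_subset[OF subspace_perp] by metis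
    then have "v \<in> x \<inter> perp y" using v by (simp add: mem_perp_iff_subset_perp)
    moreover have "iso_subspace (x \<inter> perp y)" using ix subspace_perp by (rule iso_subspace_inter)
    ultimately show "v \<in> y" using subset_perp_dpX_subset[OF y(1)] by blast
  qed
  then have "x \<inter> perp W \<subseteq> proj W x \<inter> y" using inter_perp_subset_proj[OF W(1)] by blast
  then have "proj W x \<subseteq> sumset W (proj W x \<inter> y)" by (rule proj_subset_sumset)
  moreover have "sumset W (proj W x \<inter> y) \<subseteq> proj W x"
    using proj_in_dpX_of_meet subset_proj[OF W(1)] x
    by (intro sumset_subset) (auto dest: dpX_iso_subspace)
  ultimately show "sumset W (proj W x \<inter> y) = proj W x" by blast
  show "u0 \<inter> y \<subseteq> proj W x" using y(2) subset_proj[OF W(1)] x by (auto dest: dpX_iso_subspace)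
qed

end

lemma geod_join:
  assumes z: "z \<in> dpX tiso" and z': "z' \<in> dpX tiso" and x: "x \<in> dpX tiso"
    and zx: "geod_le z x" and z'x: "geod_le z' x"
  obtains m where "m \<in> dpX tiso" "geod_le z m" "geod_le z' m" "geod_le m x"
    "dpdist tiso u0 m \<le> dpdist tiso u0 z + dpdist tiso u0 z'"
    "\<And>y. y \<in> dpX tiso \<Longrightarrow> geod_le z y \<Longrightarrow> geod_le z' y \<Longrightarrow> geod_le y x \<Longrightarrow> geod_le m y"
proof -
  let ?W = "u0 \<inter> z \<inter> z'"
  have W: "vec.subspace ?W" "?W \<subseteq> u0"
    using z z' subspace_u0 by (auto dest!: dpX_iso_subspace intro!: vec.subspace_inter)
  have u0x: "u0 \<inter> x \<subseteq> ?W" using zx z'x geod_le_iff[OF z x] geod_le_iff[OF z' x] by auto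
  note proj = proj_in_dpX_of_meet[OF W x u0x] u0_inter_proj[OF W x u0x]
    proj_geod_le[OF W x u0x] geod_le_proj[OF W x u0x] proj_geod_le_least[OF W x u0x]
  show ?thesis
  proof (rule that[OF proj(1) _ _ proj(3)])
    show "geod_le z (proj ?W x)" "geod_le z' (proj ?W x)" using proj(4) z z' zx z'x by auto
    show "dpdist tiso u0 (proj ?W x) \<le> dpdist tiso u0 z + dpdist tiso u0 z'"
      using dpdist_le_add_of_meet[OF z z'] proj(2) by simp
    show "geod_le (proj ?W x) y"
      if "y \<in> dpX tiso" "geod_le z y" "geod_le z' y" "geod_le y x" for y
      using that proj(5) geod_le_iff[OF z that(1)] geod_le_iff[OF z' that(1)] by auto
  qed
qed

section \<open>Products of the functions \<open>f\<^sub>z\<close>\<close>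

definition min_upper_bounds :: "('k^'n) set \<Rightarrow> ('k^'n) set \<Rightarrow> ('k^'n) set set" where
  "min_upper_bounds z z' = {y \<in> dpX tiso. geod_le z y \<and> geod_le z' y \<and>
     (\<forall>y' \<in> dpX tiso. geod_le z y' \<longrightarrow> geod_le z' y' \<longrightarrow> geod_le y' y \<longrightarrow> y' = y)}"

lemma dpdist_min_upper_bound_le:
  assumes z: "z \<in> dpX tiso" and z': "z' \<in> dpX tiso" and y: "y \<in> min_upper_bounds z z'"
  shows "dpdist tiso u0 y \<le> dpdist tiso u0 z + dpdist tiso u0 z'"
proof -
  have yX: "y \<in> dpX tiso" and "geod_le z y" "geod_le z' y"
    using y by (auto simp: min_upper_bounds_def)
  then obtain m where m: "m \<in> dpX tiso" "geod_le z m" "geod_le z' m" "geod_le m y"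
    "dpdist tiso u0 m \<le> dpdist tiso u0 z + dpdist tiso u0 z'"
    using geod_join[OF z z'] by metis
  then have "m = y" using y by (auto simp: min_upper_bounds_def)
  with m(5) show ?thesis by simp
qed

lemma min_upper_bounds_below:
  assumes z: "z \<in> dpX tiso" and z': "z' \<in> dpX tiso" and x: "x \<in> dpX tiso"
    and zx: "geod_le z x" and z'x: "geod_le z' x"
  obtains m where "{y \<in> min_upper_bounds z z'. geod_le y x} = {m}"
proof -
  obtain m where m: "m \<in> dpX tiso" "geod_le z m" "geod_le z' m" "geod_le m x"
    "\<And>y. y \<in> dpX tiso \<Longrightarrow> geod_le z y \<Longrightarrow> geod_le z' y \<Longrightarrow> geod_le y x \<Longrightarrow> geod_le m y"
    using geod_join[OF z z' x zx z'x] by metis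
  have "m \<in> min_upper_bounds z z'"
    unfolding min_upper_bounds_def
  proof (intro CollectI conjI ballI impI)
    fix y' assume y': "y' \<in> dpX tiso" "geod_le z y'" "geod_le z' y'" "geod_le y' m"
    have "geod_le m y'" using m(5) y' geod_le_trans[OF y'(1) m(1) x y'(4) m(4)] by blast
    then show "y' = m" using geod_le_antisym[OF y'(1) m(1) y'(4)] by simp
  qed (use m in auto)
  moreover have "y = m" if "y \<in> min_upper_bounds z z'" "geod_le y x" for y
    using that m by (auto simp: min_upper_bounds_def)
  ultimately have "{y \<in> min_upper_bounds z z'. geod_le y x} = {m}" using m(4) by blast
  then show ?thesis by (rule that)
qed

lemma fz_mult_fz:
  assumes z: "z \<in> dpX tiso" and z': "z' \<in> dpX tiso" and x: "x \<in> dpX tiso"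
  shows "fz tiso u0 z x * fz tiso u0 z' x = (\<Sum>y\<in>min_upper_bounds z z'. fz tiso u0 y x)"
proof -
  have sum: "(\<Sum>y\<in>min_upper_bounds z z'. fz tiso u0 y x)
      = real (card {y \<in> min_upper_bounds z z'. geod_le y x})"
    by (simp add: fz_geod_le sum.If_cases finite_vec_sets Int_def)
  show ?thesis
  proof (cases "geod_le z x \<and> geod_le z' x")
    case True
    then obtain m where "{y \<in> min_upper_bounds z z'. geod_le y x} = {m}"
      using min_upper_bounds_below[OF z z' x] by blast
    then show ?thesis using True sum by (simp add: fz_geod_le)
  next
    case False
    have "{y \<in> min_upper_bounds z z'. geod_le y x} = {}"
      using False geod_le_trans[OF z _ x] geod_le_trans[OF z' _ x]
      by (auto simp: min_upper_bounds_def)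
    then show ?thesis using False sum by (auto simp: fz_geod_le)
  qed
qed

end

lemma sum_fun_apply: "(\<Sum>i\<in>A. f i) x = (\<Sum>i\<in>A. f i x :: 'b::comm_monoid_add)"
  by (induction A rule: infinite_finite_induct) auto

interpretation fvp: vector_space_pair "fscale :: real \<Rightarrow> ('a \<Rightarrow> real) \<Rightarrow> 'a \<Rightarrow> real"
  "fscale :: real \<Rightarrow> ('a \<Rightarrow> real) \<Rightarrow> 'a \<Rightarrow> real"
  by unfold_locales (auto simp: fscale_def algebra_simps)

lemma restr_linear: "Vector_Spaces.linear fscale fscale (restr A)"
  by (unfold_locales) (auto simp: restr_def fscale_def)

lemma dim_le_card_if_determined_on:
  fixes H :: "('a \<Rightarrow> real) set"
  assumes H: "fvs.subspace H" and Y: "finite Y"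
    and determined: "\<And>h. h \<in> H \<Longrightarrow> (\<forall>y\<in>Y. h y = 0) \<Longrightarrow> h = 0"
  shows "fvs.dim H \<le> card Y"
proof -
  let ?D = "(\<lambda>y x. if x = y then 1 else 0 :: real) ` Y"
  have inj: "inj_on (restr Y) H"
  proof
    fix h1 h2 assume h: "h1 \<in> H" "h2 \<in> H" "restr Y h1 = restr Y h2"
    have "(h1 - h2) y = 0" if "y \<in> Y" for y
      using fun_cong[OF h(3), of y] that by (simp add: restr_def)
    then show "h1 = h2" using determined[OF fvs.subspace_diff[OF H h(1,2)]] by simp
  qed
  obtain B where B: "B \<subseteq> H" "fvs.independent B" "H \<subseteq> fvs.span B" "card B = fvs.dim H"
    using fvs.basis_exists[of H] by blast
  have "fvs.span B \<subseteq> H" using fvs.span_mono[OF B(1)] fvs.span_eq_iff[THEN iffD2, OF H] by simp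
  then have "fvs.independent (restr Y ` B)"
    using fvp.linear_independent_injective_image[OF restr_linear B(2)] inj_on_subset[OF inj] by blast
  moreover have "restr Y ` B \<subseteq> fvs.span ?D"
  proof
    fix h assume "h \<in> restr Y ` B"
    then obtain b where "h = restr Y b" by blast
    then have "h = (\<Sum>y\<in>Y. fscale (b y) (\<lambda>x. if x = y then 1 else 0))"
      by (auto simp: restr_def sum_fun_apply fscale_def Y if_distrib cong: if_cong)
    also have "\<dots> \<in> fvs.span ?D"
      by (intro fvs.span_sum fvs.span_scale fvs.span_base) auto
    finally show "h \<in> fvs.span ?D" .
  qed
  ultimately have "card (restr Y ` B) \<le> card ?D"
    using fvs.independent_span_bound[OF finite_imageI[OF Y]] by blast
  also have "\<dots> \<le> card Y" using Y by (rule card_image_le)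
  finally show ?thesis using card_image[OF inj_on_subset[OF inj B(1)]] B(4) by simp
qed

lemma nonneg_eq_0_if_pos_weighted_sum_eq_0:
  fixes F :: "'a \<Rightarrow> real"
  assumes R: "finite R" and a: "\<And>r. r \<in> R \<Longrightarrow> 0 < a r" and A: "\<And>r. r \<in> R \<Longrightarrow> finite (A r)"
    and F: "\<And>r x. r \<in> R \<Longrightarrow> x \<in> A r \<Longrightarrow> 0 \<le> F x"
    and sum: "(\<Sum>r\<in>R. a r * (\<Sum>x\<in>A r. F x)) = 0"
    and x: "r \<in> R" "x \<in> A r"
  shows "F x = 0"
proof -
  have inner: "0 \<le> (\<Sum>x\<in>A r. F x)" if "r \<in> R" for r
    using F that by (simp add: sum_nonneg)
  then have "0 \<le> a r * (\<Sum>x\<in>A r. F x)" if "r \<in> R" for r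
    using a[OF that] that by simp
  then have "a r * (\<Sum>x\<in>A r. F x) = 0"
    using sum sum_nonneg_eq_0_iff[OF R, of "\<lambda>r. a r * (\<Sum>x\<in>A r. F x)"] x(1) by blast
  then have "(\<Sum>x\<in>A r. F x) = 0" using a[OF x(1)] by simp
  then show ?thesis using sum_nonneg_eq_0_iff[OF A] F x by blast
qed

lemma hom_upto_subspace: "fvs.subspace (hom_upto tiso u0 j)"
  unfolding fvs.subspace_def
proof (intro conjI ballI allI)
  let ?Z = "{z \<in> dpX tiso. dpdist tiso u0 z \<le> j}"
  show "0 \<in> hom_upto tiso u0 j" unfolding hom_upto_def
    by (rule CollectI, rule exI[of _ "\<lambda>_. 0"]) auto
  fix g h assume "g \<in> hom_upto tiso u0 j" "h \<in> hom_upto tiso u0 j"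
  then obtain c d where "g = (\<lambda>x. \<Sum>z\<in>?Z. c z * fz tiso u0 z x)" "h = (\<lambda>x. \<Sum>z\<in>?Z. d z * fz tiso u0 z x)"
    unfolding hom_upto_def by blast
  then show "g + h \<in> hom_upto tiso u0 j" unfolding hom_upto_def
    by (intro CollectI exI[of _ "\<lambda>z. c z + d z"]) (auto simp: sum.distrib algebra_simps)
next
  fix a :: real and g assume "g \<in> hom_upto tiso u0 j"
  then obtain c where "g = (\<lambda>x. \<Sum>z\<in>{z \<in> dpX tiso. dpdist tiso u0 z \<le> j}. c z * fz tiso u0 z x)"
    unfolding hom_upto_def by blast
  then show "fscale a g \<in> hom_upto tiso u0 j" unfolding hom_upto_def
    by (intro CollectI exI[of _ "\<lambda>z. a * c z"]) (auto simp: fscale_def sum_distrib_left algebra_simps)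
qed

lemma sum_fz_in_hom_upto:
  fixes tiso :: "('k::{finite,field}^'n::finite) set \<Rightarrow> bool"
  assumes "A \<subseteq> {z \<in> dpX tiso. dpdist tiso u0 z \<le> j}"
  shows "(\<lambda>x. \<Sum>z\<in>A. fz tiso u0 z x) \<in> hom_upto tiso u0 j"
  unfolding hom_upto_def
proof (intro CollectI exI[of _ "\<lambda>z. if z \<in> A then 1 else 0"] ext)
  fix x
  have "(\<Sum>z\<in>A. fz tiso u0 z x) = (\<Sum>z\<in>{z \<in> dpX tiso. dpdist tiso u0 z \<le> j} \<inter> A. fz tiso u0 z x)"
    using assms by (simp add: Int_absorb1)
  also have "\<dots> = (\<Sum>z\<in>{z \<in> dpX tiso. dpdist tiso u0 z \<le> j}. if z \<in> A then fz tiso u0 z x else 0)"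
    by (rule sum.inter_restrict[OF finite_vec_sets])
  also have "\<dots> = (\<Sum>z\<in>{z \<in> dpX tiso. dpdist tiso u0 z \<le> j}. (if z \<in> A then 1 else 0) * fz tiso u0 z x)"
    by (intro sum.cong refl) simp
  finally show "(\<Sum>z\<in>A. fz tiso u0 z x)
      = (\<Sum>z\<in>{z \<in> dpX tiso. dpdist tiso u0 z \<le> j}. (if z \<in> A then 1 else 0) * fz tiso u0 z x)" .
qed

context based_polar_space
begin

lemma hom_upto_square:
  assumes g: "g \<in> hom_upto tiso u0 e"
  obtains F where "F \<in> hom_upto tiso u0 (2 * e)" "\<And>x. x \<in> dpX tiso \<Longrightarrow> F x = g x * g x"
proof -
  let ?Z = "{z \<in> dpX tiso. dpdist tiso u0 z \<le> e}"
  obtain c where c: "g = (\<lambda>x. \<Sum>z\<in>?Z. c z * fz tiso u0 z x)"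
    using g by (auto simp: hom_upto_def)
  define F where "F = (\<Sum>z\<in>?Z. \<Sum>z'\<in>?Z.
      fscale (c z * c z') (\<lambda>x. \<Sum>y\<in>min_upper_bounds z z'. fz tiso u0 y x))"
  have "(\<lambda>x. \<Sum>y\<in>min_upper_bounds z z'. fz tiso u0 y x) \<in> hom_upto tiso u0 (2 * e)"
    if "z \<in> ?Z" "z' \<in> ?Z" for z z'
    using that dpdist_min_upper_bound_le
    by (intro sum_fz_in_hom_upto) (fastforce simp: min_upper_bounds_def)
  then have "F \<in> hom_upto tiso u0 (2 * e)"
    unfolding F_def by (intro fvs.subspace_sum fvs.subspace_scale hom_upto_subspace)
  moreover have "F x = g x * g x" if x: "x \<in> dpX tiso" for x
  proof -
    have "F x = (\<Sum>z\<in>?Z. \<Sum>z'\<in>?Z. c z * c z' * (\<Sum>y\<in>min_upper_bounds z z'. fz tiso u0 y x))"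
      by (simp add: F_def sum_fun_apply fscale_def)
    also have "\<dots> = (\<Sum>z\<in>?Z. \<Sum>z'\<in>?Z. c z * c z' * (fz tiso u0 z x * fz tiso u0 z' x))"
      using x by (intro sum.cong refl) (simp add: fz_mult_fz)
    also have "\<dots> = g x * g x" unfolding c by (simp add: sum_product algebra_simps)
    finally show ?thesis .
  qed
  ultimately show ?thesis by (rule that)
qed

lemma design_vanishing:
  assumes Y: "Y \<subseteq> dpX tiso" and wpos: "\<forall>y\<in>Y. w y > 0"
    and design: "\<forall>f \<in> hom_upto tiso u0 (2 * e).
       (\<Sum>r\<in>dpdist tiso u0 ` Y.
          (\<Sum>y\<in>Y \<inter> shell tiso u0 r. w y) / real (card (shell tiso u0 r))
            * (\<Sum>x\<in>shell tiso u0 r. f x))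
       = (\<Sum>y\<in>Y. w y * f y)"
    and g: "g \<in> hom_upto tiso u0 e" and gY: "\<forall>y\<in>Y. g y = 0"
    and x: "r \<in> dpdist tiso u0 ` Y" "x \<in> shell tiso u0 r"
  shows "g x = 0"
proof -
  obtain F where F: "F \<in> hom_upto tiso u0 (2 * e)" "\<And>x. x \<in> dpX tiso \<Longrightarrow> F x = g x * g x"
    using hom_upto_square[OF g] by blast
  have "(\<Sum>y\<in>Y. w y * F y) = 0" using F(2) gY Y by (intro sum.neutral) auto
  then have sum: "(\<Sum>r\<in>dpdist tiso u0 ` Y.
      (\<Sum>y\<in>Y \<inter> shell tiso u0 r. w y) / real (card (shell tiso u0 r))
        * (\<Sum>x\<in>shell tiso u0 r. F x)) = 0"
    using design F(1) by simp
  have weight_pos: "0 < (\<Sum>y\<in>Y \<inter> shell tiso u0 r. w y) / real (card (shell tiso u0 r))"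
    if "r \<in> dpdist tiso u0 ` Y" for r
  proof -
    from that obtain y0 where "y0 \<in> Y" "r = dpdist tiso u0 y0" by blast
    then have "y0 \<in> Y \<inter> shell tiso u0 r" using Y by (auto simp: shell_def)
    then have "0 < (\<Sum>y\<in>Y \<inter> shell tiso u0 r. w y)" "0 < card (shell tiso u0 r)"
      using wpos finite_vec_sets[of Y] finite_vec_sets[of "shell tiso u0 r"]
      by (auto intro!: sum_pos simp: card_gt_0_iff)
    then show ?thesis by simp
  qed
  have "F x = 0"
    using x(2) F(2) by (intro nonneg_eq_0_if_pos_weighted_sum_eq_0[OF _ weight_pos _ _ sum x(1)])
      (auto simp: shell_def finite_vec_sets)
  then show ?thesis using F(2) x(2) by (simp add: shell_def)
qed

end

theorem theoremA6:
  fixes tiso :: "('k::{finite,field}^'n::finite) set \<Rightarrow> bool"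
    and u0 :: "('k^'n) set"
    and e :: nat
    and Y :: "('k^'n) set set"
    and w :: "('k^'n) set \<Rightarrow> real"
  assumes form: "polar_iso tiso"
    and u0: "u0 \<in> dpX tiso"
    and Y: "Y \<subseteq> dpX tiso"
    and wpos: "\<forall>y\<in>Y. w y > 0"
    and design: "\<forall>f \<in> hom_upto tiso u0 (2 * e).
       (\<Sum>r\<in>dpdist tiso u0 ` Y.
          (\<Sum>y\<in>Y \<inter> shell tiso u0 r. w y) / real (card (shell tiso u0 r))
            * (\<Sum>x\<in>shell tiso u0 r. f x))
       = (\<Sum>y\<in>Y. w y * f y)"
  shows "real (card Y) \<ge>
           real (fvs.dim (restr (\<Union>r\<in>dpdist tiso u0 ` Y. shell tiso u0 r) ` hom_upto tiso u0 e))"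
proof -
  obtain \<beta> where "polar_space tiso \<beta>" using form by (rule polar_iso_polar_space)
  then interpret based_polar_space tiso \<beta> u0
    using u0 by (simp add: based_polar_space_def based_polar_space_axioms_def)
  define S where "S = (\<Union>r\<in>dpdist tiso u0 ` Y. shell tiso u0 r)"
  have "fvs.dim (restr S ` hom_upto tiso u0 e) \<le> card Y"
  proof (rule dim_le_card_if_determined_on)
    show "fvs.subspace (restr S ` hom_upto tiso u0 e)"
      by (rule fvp.linear_subspace_image[OF restr_linear hom_upto_subspace])
    show "finite Y" by (rule finite_vec_sets)
    fix h assume "h \<in> restr S ` hom_upto tiso u0 e" and hY: "\<forall>y\<in>Y. h y = 0"
    then obtain g where g: "g \<in> hom_upto tiso u0 e" "h = restr S g" by blast
    have "Y \<subseteq> S" using Y by (auto simp: S_def shell_def)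
    then have gY: "\<forall>y\<in>Y. g y = 0" using hY by (simp add: g(2) restr_def subsetD)
    show "h = 0"
      using design_vanishing[OF Y wpos design g(1) gY] g(2) by (fastforce simp: S_def restr_def)
  qed
  then show ?thesis by (simp add: S_def)
qed

end
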